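(* Let $\{X_n\}_{n\ge1}$ be i.i.d. random variables with common distribution function $F$ satisfying Condition A1 with some $\gamma>0$. Fix a block length $m\ge 2$, and for $k\in\mathbb N$ let $M^{(m)}_{1:k}\le\dots\le M^{(m)}_{k:k}$ be the order statistics of the block maxima $M^{(m)}_1,\dots,M^{(m)}_k$. Let $(\theta_k)$ be a sequence with $\theta_k\in(0,k]$, $\theta_k\to\infty$ and $\theta_k/k\to0$ as $k\to\infty$. Then the estimator $$\hat\gamma(\theta_k,k):=(\log 2)^{-1}\Bigl(\log M^{(m)}_{k-[\theta_k/4]:k}-\log M^{(m)}_{k-[\theta_k/2]:k}\Bigr)$$ satisfies $\hat\gamma(\theta_k,k)\to\gamma$ in probability as $k\to\infty$.
   Context: Block maxima: $M^{(m)}_i:=\max_{(i-1)m<j\le im}X_j$, $i=1,\dots,k$; these are i.i.d. with distribution function $F^m$. For $u\in\mathbb R$, $[u]$ denotes the smallest integer greater than or equal to $u$. Define $V(t):=\bigl(1/(-\log F)\bigr)^{\leftarrow}(t)=F^{\leftarrow}(e^{-1/t})$, where ${}^{\leftarrow}$ denotes the generalised (left-continuous) inverse. Condition A1: (i) $\lim_{t\to\infty}\log V(tx)-\log V(t)=\gamma\log x$ for all $x>0$; (ii) for every $\varepsilon,\delta>0$ there is $t_0=t_0(\varepsilon,\delta)$ such that for $t\ge t_0$ and $x\ge1$, $|V(tx)/V(t)-x^{\gamma}|\le\varepsilon x^{\gamma+\delta}$. *)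

theory Defs
  imports "HOL-Probability.Probability"
begin

definition gen_inv :: "(real \<Rightarrow> real) \<Rightarrow> real \<Rightarrow> real" where
  "gen_inv G y = Inf {x. G x \<ge> y}"

text \<open>V(t) = (1/(-log F))^{<-}(t) = F^{<-}(exp(-1/t)).\<close>
definition V_fun :: "(real \<Rightarrow> real) \<Rightarrow> real \<Rightarrow> real" where
  "V_fun F t = gen_inv F (exp (- 1 / t))"

definition condA1 :: "(real \<Rightarrow> real) \<Rightarrow> real \<Rightarrow> bool" where
  "condA1 F \<gamma> \<longleftrightarrow>
     (\<forall>x>0. ((\<lambda>t. ln (V_fun F (t * x)) - ln (V_fun F t)) \<longlongrightarrow> \<gamma> * ln x) at_top) \<and>
     (\<forall>\<epsilon>>0. \<forall>\<delta>>0. \<exists>t0. \<forall>t\<ge>t0. \<forall>x\<ge>1.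
        \<bar>V_fun F (t * x) / V_fun F t - x powr \<gamma>\<bar> \<le> \<epsilon> * x powr (\<gamma> + \<delta>))"

definition block_max :: "(nat \<Rightarrow> 'a \<Rightarrow> real) \<Rightarrow> nat \<Rightarrow> nat \<Rightarrow> 'a \<Rightarrow> real" where
  "block_max X m i \<omega> = Max {X j \<omega> | j. (i - 1) * m < j \<and> j \<le> i * m}"

definition ord_stat :: "real list \<Rightarrow> nat \<Rightarrow> real" where
  "ord_stat ys r = sort ys ! (r - 1)"

definition block_ord_stat :: "(nat \<Rightarrow> 'a \<Rightarrow> real) \<Rightarrow> nat \<Rightarrow> nat \<Rightarrow> nat \<Rightarrow> 'a \<Rightarrow> real" where
  "block_ord_stat X m k r \<omega> = ord_stat (map (\<lambda>i. block_max X m i \<omega>) [1..<k+1]) r"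

text \<open>The estimator; [u] is the ceiling.\<close>
definition gamma_hat :: "(nat \<Rightarrow> 'a \<Rightarrow> real) \<Rightarrow> nat \<Rightarrow> real \<Rightarrow> nat \<Rightarrow> 'a \<Rightarrow> real" where
  "gamma_hat X m \<theta> k \<omega> =
     (ln (block_ord_stat X m k (nat (int k - \<lceil>\<theta> / 4\<rceil>)) \<omega>)
      - ln (block_ord_stat X m k (nat (int k - \<lceil>\<theta> / 2\<rceil>)) \<omega>)) / ln 2"

end

theory Submission
  imports Defs
begin

text \<open>
  Let \<open>N(x)\<close> be the number of the first \<open>k\<close> blocks whose maximum is at most \<open>x\<close>.
  Then \<open>M_{k-j:k} \<le> x\<close> iff \<open>N(x) \<ge> k - j\<close>, and \<open>N(x)\<close> is a sum of \<open>k\<close> independent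
  indicators with success probability \<open>F(x)^m\<close>. Chebyshev's inequality therefore places
  \<open>M_{k-j:k}\<close>, with probability \<open>1 - O(1/j)\<close>, in the interval \<open>(V(t/b^2)/b, V(b t)]\<close>
  with \<open>t = m k / j\<close>, for any fixed \<open>b > 1\<close> once \<open>j/k\<close> is small.
  For \<open>j \<approx> \<theta>/4\<close> and \<open>j \<approx> \<theta>/2\<close> the two values of \<open>t\<close> have ratio tending to 2, so
  regular variation of \<open>V\<close> -- Condition A1(i), which by monotonicity of \<open>V\<close> also holds
  along arguments with converging ratio -- confines the log-spacing to
  \<open>\<gamma> ln 2 \<plusminus> (3\<gamma> + 1) ln b\<close>.
\<close>

section \<open>Quantile function of a distribution\<close>

context real_distribution
begin

lemma gen_inv_cdf_le_iff:
  assumes "0 < u" "u < 1"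
  shows "gen_inv (cdf M) u \<le> x \<longleftrightarrow> u \<le> cdf M x"
proof -
  let ?S = "{x. u \<le> cdf M x}"
  have "eventually (\<lambda>x. u < cdf M x) at_top"
    using cdf_lim_at_top_prob assms(2) by (rule order_tendstoD)
  then obtain x0 where "u < cdf M x0" by (meson eventually_at_top_linorder order.refl)
  then have ne: "?S \<noteq> {}" by (auto intro: less_imp_le)
  have "eventually (\<lambda>x. cdf M x < u) at_bot"
    using cdf_lim_at_bot assms(1) by (rule order_tendstoD)
  then obtain b where "\<And>x. x \<le> b \<Longrightarrow> cdf M x < u" by (auto simp: eventually_at_bot_linorder)
  then have bdd: "bdd_below ?S"
    by (metis (mono_tags) bdd_belowI le_cases mem_Collect_eq not_le)
  have upper: "u \<le> cdf M y" if y: "gen_inv (cdf M) u < y" for y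
  proof -
    obtain s where "s \<in> ?S" "s < y"
      using y cInf_lessD[OF ne] unfolding gen_inv_def by blast
    then show ?thesis using cdf_nondecreasing[of s y] by simp
  qed
  txt \<open>Right-continuity of the cdf makes the infimum attained.\<close>
  have "u \<le> cdf M (gen_inv (cdf M) u)"
  proof (rule tendsto_lowerbound)
    show "(cdf M \<longlongrightarrow> cdf M (gen_inv (cdf M) u)) (at_right (gen_inv (cdf M) u))"
      using cdf_is_right_cont by (simp add: continuous_within)
    show "eventually (\<lambda>y. u \<le> cdf M y) (at_right (gen_inv (cdf M) u))"
      using upper by (auto simp: eventually_at_right_field intro: gt_ex)
  qed simp
  then show ?thesis
    using cdf_nondecreasing cInf_lower[OF _ bdd] unfolding gen_inv_def
    by (metis mem_Collect_eq order.trans)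
qed

lemma V_fun_cdf_le_iff:
  "0 < t \<Longrightarrow> V_fun (cdf M) t \<le> x \<longleftrightarrow> exp (- 1 / t) \<le> cdf M x"
  unfolding V_fun_def by (rule gen_inv_cdf_le_iff) auto

lemma cdf_V_fun_ge: "0 < t \<Longrightarrow> exp (- 1 / t) \<le> cdf M (V_fun (cdf M) t)"
  using V_fun_cdf_le_iff by blast

lemma cdf_less_if_less_V_fun: "0 < t \<Longrightarrow> x < V_fun (cdf M) t \<Longrightarrow> cdf M x < exp (- 1 / t)"
  using V_fun_cdf_le_iff by (meson not_le)

lemma mono_on_V_fun_cdf: "mono_on {0<..} (V_fun (cdf M))"
proof (rule mono_onI)
  fix t t' :: real assume "t \<in> {0<..}" "t' \<in> {0<..}" "t \<le> t'"
  then have "exp (- 1 / t) \<le> exp (- 1 / t')" by (simp add: frac_le)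
  then show "V_fun (cdf M) t \<le> V_fun (cdf M) t'"
    using \<open>t \<in> _\<close> \<open>t' \<in> _\<close> cdf_V_fun_ge V_fun_cdf_le_iff by (meson greaterThan_iff order.trans)
qed

end

section \<open>Regular variation\<close>

lemma eventually_pos_if_ln_doubling_tendsto:
  fixes V :: "real \<Rightarrow> real"
  assumes mono: "mono_on {0<..} V"
    and lim: "((\<lambda>t. ln (V (t * 2)) - ln (V t)) \<longlongrightarrow> c) at_top" and "0 < c"
  shows "eventually (\<lambda>t. 0 < V t) at_top"
proof -
  obtain T where T: "\<And>t. T \<le> t \<Longrightarrow> ln (V t) < ln (V (t * 2))"
    using order_tendstoD(1)[OF lim \<open>0 < c\<close>] by (auto simp: eventually_at_top_linorder)
  define t where "t = max T 1"
  have t: "T \<le> t" "0 < t" unfolding t_def by auto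
  txt \<open>As \<open>ln (- x) = ln x\<close>, growth of \<open>ln V\<close> is impossible where \<open>V\<close> is nonpositive and nondecreasing.\<close>
  have ln_abs: "ln x = ln \<bar>x\<bar>" for x :: real
    by (cases "0 \<le> x") (simp_all add: ln_minus)
  have "0 < V (t * 2 * 2)"
  proof (rule ccontr)
    assume nonpos: "\<not> 0 < V (t * 2 * 2)"
    have mono_t: "V t \<le> V (t * 2)" "V (t * 2) \<le> V (t * 2 * 2)"
      using t by (auto intro!: mono_onD[OF mono])
    have growth: "ln (V (t * 2)) < ln (V (t * 2 * 2))" using T[of "t * 2"] t by linarith
    have "V (t * 2) \<noteq> 0"
    proof
      assume "V (t * 2) = 0"
      moreover from this have "V (t * 2 * 2) = 0" using mono_t nonpos by linarith
      ultimately show False using growth by simp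
    qed
    then have "ln \<bar>V (t * 2)\<bar> \<le> ln \<bar>V t\<bar>" using mono_t nonpos by simp
    then have "ln (V (t * 2)) \<le> ln (V t)" by (simp only: ln_abs[symmetric])
    then show False using T t(1) by (meson not_le)
  qed
  then show ?thesis
    unfolding eventually_at_top_linorder
  proof (intro exI allI impI)
    fix s assume "t * 2 * 2 \<le> s"
    then have "V (t * 2 * 2) \<le> V s" using t by (intro mono_onD[OF mono]) auto
    then show "0 < V s" using \<open>0 < V (t * 2 * 2)\<close> by linarith
  qed
qed

lemma eventually_ln_ratio_gt_of_regular_variation:
  fixes V :: "real \<Rightarrow> real" and s s' :: "'b \<Rightarrow> real"
  assumes mono: "mono_on {0<..} V" and pos: "eventually (\<lambda>t. 0 < V t) at_top"
    and rv: "\<And>x. 0 < x \<Longrightarrow> ((\<lambda>t. ln (V (t * x)) - ln (V t)) \<longlongrightarrow> \<gamma> * ln x) at_top"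
    and s: "filterlim s at_top F" and ratio: "((\<lambda>y. s' y / s y) \<longlongrightarrow> \<rho>) F" and "0 < \<rho>"
    and "a < \<gamma> * ln \<rho>"
  shows "eventually (\<lambda>y. a < ln (V (s' y)) - ln (V (s y))) F"
proof -
  define \<eta> where "\<eta> = \<gamma> * ln \<rho> - a"
  define c where "c = exp (\<eta> / (\<bar>\<gamma>\<bar> + 1))"
  have "0 < \<eta>" using assms(7) by (simp add: \<eta>_def)
  then have "1 < c" "\<bar>\<gamma>\<bar> * ln c < \<eta>"
    by (simp_all add: c_def pos_divide_less_eq algebra_simps)
  moreover have "\<gamma> * ln c \<le> \<bar>\<gamma>\<bar> * ln c" using \<open>1 < c\<close> by (intro mult_right_mono) auto
  ultimately have "a < \<gamma> * ln \<rho> - \<gamma> * ln c" unfolding \<eta>_def by linarith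
  then have a_less: "a < \<gamma> * ln (\<rho> / c)"
    using \<open>0 < \<rho>\<close> \<open>1 < c\<close> by (simp add: ln_div right_diff_distrib)
  have "0 < \<rho> / c" "\<rho> / c < \<rho>" using \<open>1 < c\<close> \<open>0 < \<rho>\<close> by (simp_all add: divide_less_eq)
  have "((\<lambda>y. ln (V (s y * (\<rho> / c))) - ln (V (s y))) \<longlongrightarrow> \<gamma> * ln (\<rho> / c)) F"
    using \<open>0 < \<rho> / c\<close> by (rule filterlim_compose[OF rv s])
  then have "eventually (\<lambda>y. a < ln (V (s y * (\<rho> / c))) - ln (V (s y))) F"
    using a_less by (rule order_tendstoD(1))
  moreover have "eventually (\<lambda>y. \<rho> / c < s' y / s y) F"
    using ratio \<open>\<rho> / c < \<rho>\<close> by (rule order_tendstoD(1))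
  moreover have "eventually (\<lambda>y. 0 < V (s y * (\<rho> / c))) F"
    using eventually_compose_filterlim[OF pos filterlim_tendsto_pos_mult_at_top[OF tendsto_const \<open>0 < \<rho> / c\<close> s]]
    by (simp add: mult.commute)
  moreover have "eventually (\<lambda>y. 0 < s y) F"
    using s by (simp add: filterlim_at_top_dense)
  ultimately show ?thesis
  proof eventually_elim
    case (elim y)
    have "s y * (\<rho> / c) < s' y" using elim(2,4) by (simp add: less_divide_eq mult.commute)
    moreover have "0 < s y * (\<rho> / c)" using elim(4) \<open>0 < \<rho> / c\<close> by (rule mult_pos_pos)
    ultimately have "V (s y * (\<rho> / c)) \<le> V (s' y)" by (intro mono_onD[OF mono]) auto
    then have "ln (V (s y * (\<rho> / c))) \<le> ln (V (s' y))" using elim(3) by simp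
    then show ?case using elim(1) by linarith
  qed
qed

lemma tendsto_ln_ratio_of_regular_variation:
  fixes V :: "real \<Rightarrow> real" and s s' :: "'b \<Rightarrow> real"
  assumes mono: "mono_on {0<..} V" and pos: "eventually (\<lambda>t. 0 < V t) at_top"
    and rv: "\<And>x. 0 < x \<Longrightarrow> ((\<lambda>t. ln (V (t * x)) - ln (V t)) \<longlongrightarrow> \<gamma> * ln x) at_top"
    and s: "filterlim s at_top F" and ratio: "((\<lambda>y. s' y / s y) \<longlongrightarrow> \<rho>) F" and "0 < \<rho>"
  shows "((\<lambda>y. ln (V (s' y)) - ln (V (s y))) \<longlongrightarrow> \<gamma> * ln \<rho>) F"
proof (rule order_tendstoI)
  fix a assume "a < \<gamma> * ln \<rho>"
  then show "eventually (\<lambda>y. a < ln (V (s' y)) - ln (V (s y))) F"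
    using eventually_ln_ratio_gt_of_regular_variation[OF mono pos rv s ratio \<open>0 < \<rho>\<close>] by blast
next
  fix a assume "\<gamma> * ln \<rho> < a"
  have s_pos: "eventually (\<lambda>y. 0 < s y) F" using s by (simp add: filterlim_at_top_dense)
  have "filterlim (\<lambda>y. s' y / s y * s y) at_top F"
    using filterlim_tendsto_pos_mult_at_top[OF ratio \<open>0 < \<rho>\<close> s] .
  then have "filterlim s' at_top F"
    by (rule filterlim_cong[THEN iffD1, rotated 3]) (use s_pos in \<open>auto elim: eventually_mono\<close>)
  moreover have "((\<lambda>y. s y / s' y) \<longlongrightarrow> inverse \<rho>) F"
    using tendsto_inverse[OF ratio] \<open>0 < \<rho>\<close> by simp
  moreover have "- a < \<gamma> * ln (inverse \<rho>)" using \<open>\<gamma> * ln \<rho> < a\<close> \<open>0 < \<rho>\<close> by (simp add: ln_inverse)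
  ultimately have "eventually (\<lambda>y. - a < ln (V (s y)) - ln (V (s' y))) F"
    using \<open>0 < \<rho>\<close> by (intro eventually_ln_ratio_gt_of_regular_variation[OF mono pos rv]) auto
  then show "eventually (\<lambda>y. ln (V (s' y)) - ln (V (s y)) < a) F"
    by eventually_elim linarith
qed

lemma eventually_ln_spacing_bounds:
  fixes V :: "real \<Rightarrow> real" and t1 t2 :: "'b \<Rightarrow> real"
  assumes mono: "mono_on {0<..} V" and pos: "eventually (\<lambda>t. 0 < V t) at_top"
    and rv: "\<And>x. 0 < x \<Longrightarrow> ((\<lambda>t. ln (V (t * x)) - ln (V t)) \<longlongrightarrow> \<gamma> * ln x) at_top"
    and t2: "filterlim t2 at_top F" and ratio: "((\<lambda>y. t1 y / t2 y) \<longlongrightarrow> r) F"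
    and "0 < r" "1 < b" and slack: "(3 * \<gamma> + 1) * ln b < \<epsilon> * ln r"
  shows "eventually (\<lambda>y. ln (V (b * t1 y)) - ln (V (t2 y / b\<^sup>2)) + ln b < (\<gamma> + \<epsilon>) * ln r
      \<and> (\<gamma> - \<epsilon>) * ln r < ln (V (t1 y / b\<^sup>2)) - ln (V (b * t2 y)) - ln b) F"
proof -
  have b_pos: "0 < b" "0 < b\<^sup>2" "0 < b ^ 3" using \<open>1 < b\<close> by simp_all
  have "((\<lambda>y. ln (V (b * t1 y)) - ln (V (t2 y / b\<^sup>2))) \<longlongrightarrow> \<gamma> * ln (b ^ 3 * r)) F"
  proof (rule tendsto_ln_ratio_of_regular_variation[OF mono pos rv])
    show "filterlim (\<lambda>y. t2 y / b\<^sup>2) at_top F"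
      using filterlim_tendsto_pos_mult_at_top[OF tendsto_const _ t2, of "1 / b\<^sup>2"] b_pos by simp
    have "(\<lambda>y. b * t1 y / (t2 y / b\<^sup>2)) = (\<lambda>y. b ^ 3 * (t1 y / t2 y))"
      by (simp add: fun_eq_iff power2_eq_square power3_eq_cube)
    then show "((\<lambda>y. b * t1 y / (t2 y / b\<^sup>2)) \<longlongrightarrow> b ^ 3 * r) F"
      using tendsto_mult_left[OF ratio, of "b ^ 3"] by simp
    show "0 < b ^ 3 * r" using b_pos(3) \<open>0 < r\<close> by simp
  qed
  moreover have "\<gamma> * ln (b ^ 3 * r) < (\<gamma> + \<epsilon>) * ln r - ln b"
    using slack b_pos \<open>0 < r\<close> by (simp add: ln_mult ln_realpow algebra_simps)
  ultimately have upper: "eventually (\<lambda>y. ln (V (b * t1 y)) - ln (V (t2 y / b\<^sup>2)) < (\<gamma> + \<epsilon>) * ln r - ln b) F"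
    by (rule order_tendstoD)
  have "((\<lambda>y. ln (V (t1 y / b\<^sup>2)) - ln (V (b * t2 y))) \<longlongrightarrow> \<gamma> * ln (r / b ^ 3)) F"
  proof (rule tendsto_ln_ratio_of_regular_variation[OF mono pos rv])
    show "filterlim (\<lambda>y. b * t2 y) at_top F"
      using filterlim_tendsto_pos_mult_at_top[OF tendsto_const b_pos(1) t2] .
    have "(\<lambda>y. t1 y / b\<^sup>2 / (b * t2 y)) = (\<lambda>y. (t1 y / t2 y) / b ^ 3)"
      by (simp add: fun_eq_iff power2_eq_square power3_eq_cube)
    then show "((\<lambda>y. t1 y / b\<^sup>2 / (b * t2 y)) \<longlongrightarrow> r / b ^ 3) F"
      using tendsto_divide[OF ratio tendsto_const, of "b ^ 3"] b_pos by simp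
    show "0 < r / b ^ 3" using b_pos(3) \<open>0 < r\<close> by simp
  qed
  moreover have "(\<gamma> - \<epsilon>) * ln r + ln b < \<gamma> * ln (r / b ^ 3)"
    using slack b_pos \<open>0 < r\<close> by (simp add: ln_div ln_realpow algebra_simps)
  ultimately have lower: "eventually (\<lambda>y. (\<gamma> - \<epsilon>) * ln r + ln b < ln (V (t1 y / b\<^sup>2)) - ln (V (b * t2 y))) F"
    by (rule order_tendstoD)
  show ?thesis using upper lower by eventually_elim linarith
qed

lemma log_ratio_bracket:
  fixes L1 T1 U1 L2 T2 U2 \<gamma> \<epsilon> r :: real
  assumes "1 < r" "0 < L1" "L1 < T1" "T1 \<le> U1" "0 < L2" "L2 < T2" "T2 \<le> U2"
    and "ln U1 - ln L2 < (\<gamma> + \<epsilon>) * ln r" "(\<gamma> - \<epsilon>) * ln r < ln L1 - ln U2"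
  shows "\<bar>(ln T1 - ln T2) / ln r - \<gamma>\<bar> < \<epsilon>"
proof -
  have "ln T1 \<le> ln U1" "ln L2 < ln T2" "ln L1 < ln T1" "ln T2 \<le> ln U2"
    using assms by auto
  moreover have "0 < ln r" using \<open>1 < r\<close> by simp
  ultimately have "\<gamma> - \<epsilon> < (ln T1 - ln T2) / ln r" "(ln T1 - ln T2) / ln r < \<gamma> + \<epsilon>"
    using assms(8,9) by (simp_all add: divide_simps)
  then show ?thesis by linarith
qed

section \<open>Order statistics of block maxima\<close>

lemma sorted_nth_le_iff_length_filter:
  fixes xs :: "'a :: linorder list"
  assumes "sorted xs" "i < length xs"
  shows "xs ! i \<le> x \<longleftrightarrow> i < length (filter (\<lambda>y. y \<le> x) xs)"
proof -
  let ?J = "{j. j < length xs \<and> xs ! j \<le> x}"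
  show ?thesis
    unfolding length_filter_conv_card
  proof
    assume "xs ! i \<le> x"
    then have "{..i} \<subseteq> ?J" using assms by (auto intro: order.trans sorted_nth_mono)
    then show "i < card ?J" using card_mono[of ?J "{..i}"] by simp
  next
    assume "i < card ?J"
    show "xs ! i \<le> x"
    proof (rule ccontr)
      assume "\<not> xs ! i \<le> x"
      then have "?J \<subseteq> {..<i}"
        using assms(1) by (auto simp: not_less intro: ccontr dest: sorted_nth_mono[of xs i])
      then show False using card_mono[of "{..<i}" ?J] \<open>i < card ?J\<close> by simp
    qed
  qed
qed

lemma ord_stat_le_iff:
  assumes "1 \<le> r" "r \<le> length ys"
  shows "ord_stat ys r \<le> x \<longleftrightarrow> r \<le> length (filter (\<lambda>y. y \<le> x) ys)"
proof -
  have "length (filter (\<lambda>y. y \<le> x) (sort ys)) = length (filter (\<lambda>y. y \<le> x) ys)"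
    by (metis mset_filter mset_sort size_mset)
  then show ?thesis
    unfolding ord_stat_def using assms sorted_nth_le_iff_length_filter[of "sort ys" "r - 1" x]
    by auto
qed

lemma block_max_le_iff:
  assumes "1 \<le> i" "1 \<le> m"
  shows "block_max X m i \<omega> \<le> x \<longleftrightarrow> (\<forall>l\<in>{(i - 1) * m<..i * m}. X l \<omega> \<le> x)"
proof -
  have "{X j \<omega> | j. (i - 1) * m < j \<and> j \<le> i * m} = (\<lambda>j. X j \<omega>) ` {(i - 1) * m<..i * m}"
    by auto
  moreover have "i * m \<in> {(i - 1) * m<..i * m}"
    using assms by (cases i) auto
  ultimately show ?thesis unfolding block_max_def by (auto simp: Max_le_iff)
qed

lemma card_block: "1 \<le> i \<Longrightarrow> card {(i - 1) * m<..i * m} = (m :: nat)"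
  by (cases i) auto

lemma disjoint_blocks:
  fixes i i' m :: nat
  assumes "i < i'"
  shows "{(i - 1) * m<..i * m} \<inter> {(i' - 1) * m<..i' * m} = {}"
proof -
  have "i * m \<le> (i' - 1) * m" using assms by (intro mult_le_mono1) simp
  then show ?thesis by auto
qed

lemma block_ord_stat_le_iff:
  assumes "1 \<le> r" "r \<le> k"
  shows "block_ord_stat X m k r \<omega> \<le> x \<longleftrightarrow> r \<le> card {i \<in> {1..k}. block_max X m i \<omega> \<le> x}"
proof -
  let ?P = "\<lambda>i. block_max X m i \<omega> \<le> x"
  have "length (filter (\<lambda>y. y \<le> x) (map (\<lambda>i. block_max X m i \<omega>) [1..<k+1]))
      = length (filter ?P [1..<k+1])"
    by (simp only: filter_map length_map o_def)
  also have "\<dots> = card (set (filter ?P [1..<k+1]))"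
    by (intro distinct_card[symmetric] distinct_filter distinct_upt)
  also have "set (filter ?P [1..<k+1]) = {i \<in> {1..k}. ?P i}"
    by (auto simp del: upt_Suc)
  finally show ?thesis
    unfolding block_ord_stat_def using assms by (simp add: ord_stat_le_iff del: upt_Suc)
qed

section \<open>Chebyshev bounds for counts of events\<close>

context prob_space
begin

lemma expectation_centered_indicator_product:
  assumes "A \<in> events" "B \<in> events" "prob A = q" "prob B = q"
  shows "expectation (\<lambda>\<omega>. (indicator A \<omega> - q) * (indicator B \<omega> - q)) = prob (A \<inter> B) - q\<^sup>2"
proof -
  have "(\<lambda>\<omega>. (indicator A \<omega> - q) * (indicator B \<omega> - q)) =
      (\<lambda>\<omega>. indicator (A \<inter> B) \<omega> - q * indicator A \<omega> - q * indicator B \<omega> + q\<^sup>2 :: real)"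
    by (auto simp: indicator_def power2_eq_square algebra_simps)
  moreover have "integrable M (indicator C :: 'a \<Rightarrow> real)" if "C \<in> events" for C
    using that by (simp add: less_top[symmetric])
  ultimately show ?thesis
    using assms by (simp add: power2_eq_square sets.Int_space_eq2 prob_space)
qed

lemma prob_count_deviation_le:
  assumes "finite I" and events: "\<And>i. i \<in> I \<Longrightarrow> A i \<in> events"
    and prob_A: "\<And>i. i \<in> I \<Longrightarrow> prob (A i) = q"
    and pairwise: "\<And>i j. i \<in> I \<Longrightarrow> j \<in> I \<Longrightarrow> i \<noteq> j \<Longrightarrow> prob (A i \<inter> A j) = q\<^sup>2"
    and "0 < d"
  shows "prob {\<omega> \<in> space M. d \<le> \<bar>(\<Sum>i\<in>I. indicator (A i) \<omega>) - real (card I) * q\<bar>}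
    \<le> real (card I) * (q - q\<^sup>2) / d\<^sup>2"
proof -
  define f where "f \<omega> = (\<Sum>i\<in>I. indicator (A i) \<omega> - q :: real)" for \<omega>
  have f_eq: "f \<omega> = (\<Sum>i\<in>I. indicator (A i) \<omega>) - real (card I) * q" for \<omega>
    unfolding f_def by (simp add: sum_subtractf)
  have f_sq: "(f \<omega>)\<^sup>2 = (\<Sum>i\<in>I. \<Sum>j\<in>I. (indicator (A i) \<omega> - q) * (indicator (A j) \<omega> - q))" for \<omega>
    unfolding f_def power2_eq_square sum_product ..
  have f_meas: "f \<in> borel_measurable M"
    unfolding f_def using events by (intro borel_measurable_sum borel_measurable_diff) auto
  have prod_int: "integrable M (\<lambda>\<omega>. (indicator (A i) \<omega> - q) * (indicator (A j) \<omega> - q) :: real)"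
    if "i \<in> I" "j \<in> I" for i j
    using that events
    by (auto simp: less_top[symmetric] ring_distribs indicator_inter_arith[symmetric])
  have E_f_sq: "expectation (\<lambda>\<omega>. (f \<omega>)\<^sup>2) = real (card I) * (q - q\<^sup>2)"
  proof -
    have "expectation (\<lambda>\<omega>. (f \<omega>)\<^sup>2)
        = (\<Sum>i\<in>I. \<Sum>j\<in>I. expectation (\<lambda>\<omega>. (indicator (A i) \<omega> - q) * (indicator (A j) \<omega> - q)))"
      unfolding f_sq using prod_int by (simp add: Bochner_Integration.integral_sum)
    also have "\<dots> = (\<Sum>i\<in>I. \<Sum>j\<in>I. if i = j then q - q\<^sup>2 else 0)"
      using events prob_A pairwise
      by (intro sum.cong refl) (simp add: expectation_centered_indicator_product)
    finally show ?thesis using \<open>finite I\<close> by simp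
  qed
  have "integrable M (\<lambda>\<omega>. (f \<omega>)\<^sup>2)"
    unfolding f_sq using prod_int by (simp add: Bochner_Integration.integrable_sum)
  then have "prob {\<omega> \<in> space M. d \<le> \<bar>f \<omega>\<bar>} \<le> real (card I) * (q - q\<^sup>2) / d\<^sup>2"
    using second_moment_method[OF f_meas _ \<open>0 < d\<close>] by (simp add: E_f_sq)
  then show ?thesis by (simp only: f_eq)
qed

lemma prob_less_le_of_deviation_bound:
  assumes Z: "Z \<in> borel_measurable M"
    and dev: "\<And>d. 0 < d \<Longrightarrow> prob {\<omega> \<in> space M. d \<le> \<bar>Z \<omega> - n * q\<bar>} \<le> n * (1 - q) / d\<^sup>2"
    and "1 < b" "0 < j" "n * (1 - q) \<le> j / b"
  shows "prob {\<omega> \<in> space M. Z \<omega> < n - j} \<le> b / ((b - 1)\<^sup>2 * j)"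
proof -
  define d where "d = j * (b - 1) / b"
  have "0 < d" "j - j / b = d" using assms(3-4) by (auto simp: d_def field_simps)
  then have "{\<omega> \<in> space M. Z \<omega> < n - j} \<subseteq> {\<omega> \<in> space M. d \<le> \<bar>Z \<omega> - n * q\<bar>}"
    using assms(5) by (auto simp: right_diff_distrib)
  moreover have "{\<omega> \<in> space M. d \<le> \<bar>Z \<omega> - n * q\<bar>} \<in> events" using Z by measurable
  ultimately have "prob {\<omega> \<in> space M. Z \<omega> < n - j} \<le> n * (1 - q) / d\<^sup>2"
    using dev[OF \<open>0 < d\<close>] by (meson finite_measure_mono order.trans)
  also have "\<dots> \<le> (j / b) / d\<^sup>2" using assms(5) by (rule divide_right_mono) simp
  also have "\<dots> = b / ((b - 1)\<^sup>2 * j)"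
    using assms(3,4) unfolding d_def
    by (simp add: power_divide power_mult_distrib) (simp add: power2_eq_square)
  finally show ?thesis .
qed

lemma prob_ge_le_of_deviation_bound:
  assumes Z: "Z \<in> borel_measurable M"
    and dev: "\<And>d. 0 < d \<Longrightarrow> prob {\<omega> \<in> space M. d \<le> \<bar>Z \<omega> - n * q\<bar>} \<le> n * (1 - q) / d\<^sup>2"
    and "1 < b" "0 < j" "b * j \<le> n * (1 - q)"
  shows "prob {\<omega> \<in> space M. n - j \<le> Z \<omega>} \<le> b / ((b - 1)\<^sup>2 * j)"
proof -
  define \<nu> where "\<nu> = n * (1 - q)"
  have "b * j \<le> \<nu>" using assms(5) unfolding \<nu>_def .
  moreover have "0 < b * j" using assms(3,4) by simp
  ultimately have "0 < \<nu>" by linarith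
  define d where "d = \<nu> * (b - 1) / b"
  have "0 < d" "\<nu> - \<nu> / b = d" using assms(3) \<open>0 < \<nu>\<close> by (auto simp: d_def field_simps)
  moreover have "j \<le> \<nu> / b" using assms(3) \<open>b * j \<le> \<nu>\<close> by (simp add: field_simps)
  ultimately have "{\<omega> \<in> space M. n - j \<le> Z \<omega>} \<subseteq> {\<omega> \<in> space M. d \<le> \<bar>Z \<omega> - n * q\<bar>}"
    unfolding \<nu>_def by (auto simp: right_diff_distrib)
  moreover have "{\<omega> \<in> space M. d \<le> \<bar>Z \<omega> - n * q\<bar>} \<in> events" using Z by measurable
  ultimately have "prob {\<omega> \<in> space M. n - j \<le> Z \<omega>} \<le> \<nu> / d\<^sup>2"
    using dev[OF \<open>0 < d\<close>] unfolding \<nu>_def by (meson finite_measure_mono order.trans)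
  also have "\<dots> = b\<^sup>2 / ((b - 1)\<^sup>2 * \<nu>)"
    using assms(3) \<open>0 < \<nu>\<close> unfolding d_def
    by (simp add: power_divide power_mult_distrib) (simp add: power2_eq_square)
  also have "\<dots> \<le> b\<^sup>2 / ((b - 1)\<^sup>2 * (b * j))"
    using assms(3,4) \<open>0 < \<nu>\<close> \<open>b * j \<le> \<nu>\<close>
    by (intro divide_left_mono mult_left_mono mult_pos_pos) auto
  also have "\<dots> = b / ((b - 1)\<^sup>2 * j)"
    using assms(3) by (simp add: power2_eq_square)
  finally show ?thesis .
qed

end

lemma filterlim_mult_div_at_top:
  fixes j :: "nat \<Rightarrow> nat" and c :: real
  assumes "(\<lambda>k. real (j k) / real k) \<longlonglongrightarrow> 0" "eventually (\<lambda>k. 0 < j k) sequentially" "0 < c"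
  shows "filterlim (\<lambda>k. c * real k / real (j k)) at_top sequentially"
proof -
  have "eventually (\<lambda>k. 0 < real (j k) / real k) sequentially"
    using assms(2) eventually_gt_at_top[of 0] by eventually_elim simp
  then have "filterlim (\<lambda>k. c * inverse (real (j k) / real k)) at_top sequentially"
    using assms(1,3) by (intro filterlim_tendsto_pos_mult_at_top[OF tendsto_const] filterlim_inverse_at_top)
  then show ?thesis by (simp add: divide_inverse ac_simps)
qed

lemma tendsto_nat_ceiling_div_ratio:
  fixes \<theta> :: "nat \<Rightarrow> real" and c :: real
  assumes \<theta>_top: "filterlim \<theta> at_top sequentially" and "0 < c"
  shows "(\<lambda>k. real (nat \<lceil>\<theta> k / c\<rceil>) / \<theta> k) \<longlonglongrightarrow> 1 / c"
proof -
  let ?j = "\<lambda>k. real (nat \<lceil>\<theta> k / c\<rceil>)"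
  have "((\<lambda>k. 1 / c + inverse (\<theta> k)) \<longlongrightarrow> 1 / c + 0) sequentially"
    using \<theta>_top by (intro tendsto_add tendsto_const tendsto_inverse_0_at_top)
  then have upper: "(\<lambda>k. 1 / c + inverse (\<theta> k)) \<longlonglongrightarrow> 1 / c" by simp
  have "eventually (\<lambda>k. 0 < \<theta> k) sequentially"
    using \<theta>_top by (simp add: filterlim_at_top_dense)
  then have "eventually (\<lambda>k. 1 / c \<le> ?j k / \<theta> k \<and> ?j k / \<theta> k \<le> 1 / c + inverse (\<theta> k)) sequentially"
  proof eventually_elim
    case (elim k)
    then have "0 < \<theta> k / c" using \<open>0 < c\<close> by simp
    then have "0 \<le> \<lceil>\<theta> k / c\<rceil>" by (simp only: zero_le_ceiling)
    then have "\<theta> k / c \<le> ?j k" "?j k \<le> \<theta> k / c + 1" by (simp_all add: of_int_ceiling_le_add_one)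
    moreover from this(2) have "?j k / \<theta> k \<le> (\<theta> k / c + 1) / \<theta> k"
      using elim by (intro divide_right_mono) auto
    ultimately show ?case using elim by (simp add: le_divide_eq field_simps)
  qed
  then show ?thesis
    by (intro tendsto_sandwich[OF _ _ tendsto_const upper]) (auto elim: eventually_mono)
qed

lemma nat_ceiling_div_asymptotics:
  fixes \<theta> :: "nat \<Rightarrow> real" and c :: real
  assumes \<theta>_top: "filterlim \<theta> at_top sequentially" and \<theta>_small: "(\<lambda>k. \<theta> k / real k) \<longlonglongrightarrow> 0"
    and "0 < c"
  shows "filterlim (\<lambda>k. real (nat \<lceil>\<theta> k / c\<rceil>)) at_top sequentially"
    and "(\<lambda>k. real (nat \<lceil>\<theta> k / c\<rceil>) / real k) \<longlonglongrightarrow> 0"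
    and "(\<lambda>k. real (nat \<lceil>\<theta> k / c\<rceil>) / \<theta> k) \<longlonglongrightarrow> 1 / c"
proof -
  let ?j = "\<lambda>k. real (nat \<lceil>\<theta> k / c\<rceil>)"
  show ratio: "(\<lambda>k. ?j k / \<theta> k) \<longlonglongrightarrow> 1 / c"
    using \<theta>_top \<open>0 < c\<close> by (rule tendsto_nat_ceiling_div_ratio)
  have \<theta>_pos: "eventually (\<lambda>k. 0 < \<theta> k) sequentially"
    using \<theta>_top by (simp add: filterlim_at_top_dense)
  have "filterlim (\<lambda>k. ?j k / \<theta> k * \<theta> k) at_top sequentially"
    using \<open>0 < c\<close> by (intro filterlim_tendsto_pos_mult_at_top[OF ratio _ \<theta>_top]) simp
  then show "filterlim ?j at_top sequentially"
    by (rule filterlim_cong[THEN iffD1, rotated 3]) (use \<theta>_pos in \<open>auto elim: eventually_mono\<close>)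
  have "(\<lambda>k. ?j k / \<theta> k * (\<theta> k / real k)) \<longlonglongrightarrow> 0"
    using tendsto_mult[OF ratio \<theta>_small] by simp
  then show "(\<lambda>k. ?j k / real k) \<longlonglongrightarrow> 0"
    by (rule tendsto_cong[THEN iffD1, rotated]) (use \<theta>_pos in \<open>auto elim: eventually_mono\<close>)
qed

section \<open>Block maxima of an i.i.d. sequence\<close>

locale iid_block_maxima = prob_space M for M :: "'a measure" +
  fixes X :: "nat \<Rightarrow> 'a \<Rightarrow> real" and F :: "real \<Rightarrow> real" and m :: nat
  assumes random_variable_X: "\<And>j. 1 \<le> j \<Longrightarrow> X j \<in> borel_measurable M"
    and indep_X: "indep_vars (\<lambda>_. borel) X {1..}"
    and distribution_X: "\<And>j x. 1 \<le> j \<Longrightarrow> prob {\<omega> \<in> space M. X j \<omega> \<le> x} = F x"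
    and block_length: "1 \<le> m"
begin

sublocale X1: real_distribution "distr M borel (X 1)"
  using random_variable_X[of 1] by simp

lemma F_eq_cdf: "F = cdf (distr M borel (X 1))"
proof
  fix x
  have "X 1 -` {..x} \<inter> space M = {\<omega> \<in> space M. X 1 \<omega> \<le> x}" by auto
  then show "F x = cdf (distr M borel (X 1)) x"
    using random_variable_X[of 1] distribution_X[of 1 x] by (simp add: cdf_def measure_distr)
qed

lemma mono_on_V_fun: "mono_on {0<..} (V_fun F)"
  unfolding F_eq_cdf by (rule X1.mono_on_V_fun_cdf)

lemma eventually_V_fun_pos:
  assumes "condA1 F \<gamma>" "0 < \<gamma>"
  shows "eventually (\<lambda>t. 0 < V_fun F t) at_top"
  using assms unfolding condA1_def
  by (intro eventually_pos_if_ln_doubling_tendsto[of _ "\<gamma> * ln 2"])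
     (auto simp: mono_on_V_fun)

lemma prob_all_le:
  assumes "finite J" "J \<subseteq> {1..}"
  shows "prob {\<omega> \<in> space M. \<forall>l\<in>J. X l \<omega> \<le> x} = F x ^ card J"
proof (cases "J = {}")
  case False
  have "indep_sets (\<lambda>l. {X l -` A \<inter> space M | A. A \<in> sets borel}) {1..}"
    using indep_X unfolding indep_vars_def2 by (rule conjunct2)
  then have "prob (\<Inter>l\<in>J. X l -` {..x} \<inter> space M) = (\<Prod>l\<in>J. prob (X l -` {..x} \<inter> space M))"
    using assms False by (intro indep_setsD) (auto intro!: exI[of _ "{..x}"])
  also have "\<dots> = (\<Prod>l\<in>J. F x)"
    using assms distribution_X by (intro prod.cong refl) (auto simp: vimage_def Int_def conj_commute)
  also have "(\<Inter>l\<in>J. X l -` {..x} \<inter> space M) = {\<omega> \<in> space M. \<forall>l\<in>J. X l \<omega> \<le> x}"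
    using False by auto
  finally show ?thesis by simp
qed (simp add: prob_space)

lemma events_all_le:
  assumes "finite J" "J \<subseteq> {1..}"
  shows "{\<omega> \<in> space M. \<forall>l\<in>J. X l \<omega> \<le> x} \<in> events"
  using assms random_variable_X by (cases "J = {}") (auto intro!: sets.sets_Collect_finite_All')

definition block_le_event :: "real \<Rightarrow> nat \<Rightarrow> 'a set" where
  "block_le_event x i = {\<omega> \<in> space M. block_max X m i \<omega> \<le> x}"

lemma block_le_event_eq:
  "1 \<le> i \<Longrightarrow> block_le_event x i = {\<omega> \<in> space M. \<forall>l\<in>{(i - 1) * m<..i * m}. X l \<omega> \<le> x}"
  unfolding block_le_event_def using block_length by (simp add: block_max_le_iff)

lemma block_le_event_in_events: "1 \<le> i \<Longrightarrow> block_le_event x i \<in> events"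
  unfolding block_le_event_eq by (rule events_all_le) auto

lemma prob_block_le_event: "1 \<le> i \<Longrightarrow> prob (block_le_event x i) = F x ^ m"
  unfolding block_le_event_eq using card_block[of i m] by (subst prob_all_le) auto

lemma prob_block_le_event_pair:
  assumes "1 \<le> i" "1 \<le> i'" "i \<noteq> i'"
  shows "prob (block_le_event x i \<inter> block_le_event x i') = (F x ^ m)\<^sup>2"
proof -
  let ?B = "{(i - 1) * m<..i * m} \<union> {(i' - 1) * m<..i' * m}"
  have "block_le_event x i \<inter> block_le_event x i' = {\<omega> \<in> space M. \<forall>l\<in>?B. X l \<omega> \<le> x}"
    using assms by (auto simp: block_le_event_eq)
  moreover have "card ?B = 2 * m"
    using assms disjoint_blocks[of i i' m] disjoint_blocks[of i' i m] card_block[of i m] card_block[of i' m]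
    by (subst card_Un_disjoint) (auto simp: Int_commute)
  moreover have "prob {\<omega> \<in> space M. \<forall>l\<in>?B. X l \<omega> \<le> x} = F x ^ card ?B"
    by (rule prob_all_le) auto
  ultimately show ?thesis by (simp add: power_mult mult.commute)
qed

definition block_le_count :: "nat \<Rightarrow> real \<Rightarrow> 'a \<Rightarrow> real" where
  "block_le_count k x \<omega> = (\<Sum>i\<in>{1..k}. indicator (block_le_event x i) \<omega>)"

lemma borel_measurable_block_le_count: "block_le_count k x \<in> borel_measurable M"
  unfolding block_le_count_def using block_le_event_in_events by measurable

lemma block_le_count_eq_card:
  "\<omega> \<in> space M \<Longrightarrow> block_le_count k x \<omega> = real (card {i \<in> {1..k}. block_max X m i \<omega> \<le> x})"
  unfolding block_le_count_def block_le_event_def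
  by (simp add: indicator_def of_nat_sum[symmetric] sum.If_cases Int_def conj_commute)

lemma prob_block_le_count_deviation:
  assumes "0 < d"
  shows "prob {\<omega> \<in> space M. d \<le> \<bar>block_le_count k x \<omega> - k * F x ^ m\<bar>} \<le> k * (1 - F x ^ m) / d\<^sup>2"
proof -
  have "prob {\<omega> \<in> space M. d \<le> \<bar>block_le_count k x \<omega> - k * F x ^ m\<bar>}
      \<le> k * (F x ^ m - (F x ^ m)\<^sup>2) / d\<^sup>2"
    using prob_count_deviation_le[of "{1..k}" "block_le_event x" "F x ^ m", OF _ _ _ _ assms]
    by (simp add: block_le_count_def block_le_event_in_events prob_block_le_event
        prob_block_le_event_pair)
  also have "\<dots> \<le> k * (1 - F x ^ m) / d\<^sup>2"
    using zero_le_power2[of "1 - F x ^ m"]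
    by (intro divide_right_mono mult_left_mono) (auto simp: power2_eq_square algebra_simps)
  finally show ?thesis .
qed

text \<open>
  With \<open>t = m k / j\<close>, the expected number of the first \<open>k\<close> blocks whose maximum exceeds
  \<open>V(b t)\<close> is at most \<open>j / b\<close>, and for \<open>V(t/b^2)/b\<close> it is at least \<open>b j\<close>; the division
  by \<open>b\<close> is needed because \<open>F < exp(-1/t)\<close> is known only strictly below \<open>V(t)\<close>.
\<close>

lemma exceedance_mean_le:
  fixes j k :: real
  assumes "0 < b" "0 < j" "0 < k"
  shows "k * (1 - F (V_fun F (b * (real m * k / j))) ^ m) \<le> j / b"
proof -
  let ?t = "b * (real m * k / j)"
  have "0 < ?t" using assms block_length by simp
  then have "exp (- 1 / ?t) ^ m \<le> F (V_fun F ?t) ^ m"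
    unfolding F_eq_cdf by (intro power_mono X1.cdf_V_fun_ge) auto
  moreover have "exp (- 1 / ?t) ^ m = exp (- (j / (b * k)))"
    using assms block_length by (simp add: exp_of_nat_mult[symmetric] field_simps)
  moreover have "1 - exp (- (j / (b * k))) \<le> j / (b * k)"
    using exp_ge_add_one_self[of "- (j / (b * k))"] by linarith
  ultimately have "1 - F (V_fun F ?t) ^ m \<le> j / (b * k)" by linarith
  then show ?thesis using assms by (simp add: field_simps)
qed

lemma exceedance_mean_ge:
  fixes j k :: real
  assumes "1 < b" "0 < j" "0 < k" "b\<^sup>2 * j \<le> (b - 1) * k" "0 < V_fun F (real m * k / j / b\<^sup>2)"
  shows "b * j \<le> k * (1 - F (V_fun F (real m * k / j / b\<^sup>2) / b) ^ m)"
proof -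
  let ?t = "real m * k / j / b\<^sup>2" and ?y = "b\<^sup>2 * j / k"
  have "0 < ?t" using assms block_length by simp
  moreover have "V_fun F ?t / b < V_fun F ?t" using assms(1,5) by (simp add: divide_less_eq)
  ultimately have "F (V_fun F ?t / b) ^ m \<le> exp (- 1 / ?t) ^ m"
    unfolding F_eq_cdf by (intro power_mono less_imp_le X1.cdf_less_if_less_V_fun X1.cdf_nonneg)
  moreover have "exp (- 1 / ?t) ^ m = exp (- ?y)"
    using assms block_length by (simp add: exp_of_nat_mult[symmetric] field_simps)
  moreover have "?y / (1 + ?y) \<le> 1 - exp (- ?y)"
  proof -
    have "0 \<le> ?y" using assms(2,3) by simp
    then have "inverse (exp ?y) \<le> inverse (1 + ?y)"
      using exp_ge_add_one_self[of ?y] by (intro le_imp_inverse_le) auto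
    moreover have "1 - inverse (1 + ?y) = ?y / (1 + ?y)"
      using \<open>0 \<le> ?y\<close> by (simp add: field_simps)
    ultimately show ?thesis by (simp add: exp_minus)
  qed
  moreover have "?y / b \<le> ?y / (1 + ?y)"
  proof (rule divide_left_mono)
    show "1 + ?y \<le> b" using assms(3,4) by (simp add: field_simps)
    show "0 \<le> ?y" "0 < b * (1 + ?y)" using assms(1-3) by (simp_all add: add_pos_nonneg)
  qed
  ultimately have "?y / b \<le> 1 - F (V_fun F ?t / b) ^ m" by linarith
  then have "k * (?y / b) \<le> k * (1 - F (V_fun F ?t / b) ^ m)"
    using assms(3) by (intro mult_left_mono) simp_all
  moreover have "k * (?y / b) = b * j" using assms(1,3) by (simp add: field_simps power2_eq_square)
  ultimately show ?thesis by simp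
qed

lemma block_ord_stat_le_iff_count:
  assumes "\<omega> \<in> space M" "j < k"
  shows "block_ord_stat X m k (k - j) \<omega> \<le> x \<longleftrightarrow> real k - real j \<le> block_le_count k x \<omega>"
proof -
  have "block_ord_stat X m k (k - j) \<omega> \<le> x \<longleftrightarrow> k - j \<le> card {i \<in> {1..k}. block_max X m i \<omega> \<le> x}"
    using assms(2) by (intro block_ord_stat_le_iff) auto
  moreover have "real k - real j = real (k - j)" using assms(2) by simp
  ultimately show ?thesis unfolding block_le_count_eq_card[OF assms(1)] by (simp only: of_nat_le_iff)
qed

lemma prob_block_ord_stat_gt:
  fixes j k :: nat and b :: real
  assumes "0 < j" "j < k" "1 < b"
  shows "prob {\<omega> \<in> space M. V_fun F (b * (real m * real k / real j)) < block_ord_stat X m k (k - j) \<omega>}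
    \<le> b / ((b - 1)\<^sup>2 * j)"
proof -
  let ?U = "V_fun F (b * (real m * real k / real j))"
  have "{\<omega> \<in> space M. ?U < block_ord_stat X m k (k - j) \<omega>}
      = {\<omega> \<in> space M. block_le_count k ?U \<omega> < real k - real j}"
    using assms(2) by (auto simp: block_ord_stat_le_iff_count simp flip: not_le)
  also have "prob \<dots> \<le> b / ((b - 1)\<^sup>2 * j)"
    using assms exceedance_mean_le[of b "real j" "real k"]
    by (intro prob_less_le_of_deviation_bound[OF borel_measurable_block_le_count
          prob_block_le_count_deviation]) auto
  finally show ?thesis .
qed

lemma prob_block_ord_stat_le:
  fixes j k :: nat and b :: real
  assumes "0 < j" "j < k" "1 < b" "b\<^sup>2 * j \<le> (b - 1) * k" "0 < V_fun F (real m * real k / real j / b\<^sup>2)"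
  shows "prob {\<omega> \<in> space M. block_ord_stat X m k (k - j) \<omega> \<le> V_fun F (real m * real k / real j / b\<^sup>2) / b}
    \<le> b / ((b - 1)\<^sup>2 * j)"
proof -
  let ?L = "V_fun F (real m * real k / real j / b\<^sup>2) / b"
  have "{\<omega> \<in> space M. block_ord_stat X m k (k - j) \<omega> \<le> ?L}
      = {\<omega> \<in> space M. real k - real j \<le> block_le_count k ?L \<omega>}"
    using assms(2) by (auto simp: block_ord_stat_le_iff_count)
  also have "prob \<dots> \<le> b / ((b - 1)\<^sup>2 * j)"
    using assms exceedance_mean_ge[of b "real j" "real k"]
    by (intro prob_ge_le_of_deviation_bound[OF borel_measurable_block_le_count
          prob_block_le_count_deviation]) auto
  finally show ?thesis .
qed

lemma borel_measurable_block_ord_stat: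
  assumes "j < k"
  shows "block_ord_stat X m k (k - j) \<in> borel_measurable M"
  unfolding borel_measurable_iff_le
proof
  fix x
  have "{\<omega> \<in> space M. block_ord_stat X m k (k - j) \<omega> \<le> x}
      = {\<omega> \<in> space M. real k - real j \<le> block_le_count k x \<omega>}"
    using assms by (auto simp: block_ord_stat_le_iff_count)
  also have "\<dots> \<in> events" using borel_measurable_block_le_count[of k x] by simp
  finally show "{\<omega> \<in> space M. block_ord_stat X m k (k - j) \<omega> \<le> x} \<in> events" .
qed

lemma prob_block_ord_stat_outside:
  fixes j k :: nat and b :: real
  assumes "0 < j" "j < k" "1 < b" "b\<^sup>2 * j \<le> (b - 1) * k" "0 < V_fun F (real m * real k / real j / b\<^sup>2)"
  shows "prob {\<omega> \<in> space M. block_ord_stat X m k (k - j) \<omega> \<le> V_fun F (real m * real k / real j / b\<^sup>2) / b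
      \<or> V_fun F (b * (real m * real k / real j)) < block_ord_stat X m k (k - j) \<omega>}
    \<le> 2 * (b / ((b - 1)\<^sup>2 * j))"
proof -
  define L where "L = V_fun F (real m * real k / real j / b\<^sup>2) / b"
  define U where "U = V_fun F (b * (real m * real k / real j))"
  let ?T = "block_ord_stat X m k (k - j)"
  let ?A = "{\<omega> \<in> space M. ?T \<omega> \<le> L}" and ?B = "{\<omega> \<in> space M. U < ?T \<omega>}"
  note [measurable] = borel_measurable_block_ord_stat[OF assms(2)]
  have "prob (?A \<union> ?B) \<le> prob ?A + prob ?B" by (intro measure_Un_le) measurable
  also have "\<dots> \<le> 2 * (b / ((b - 1)\<^sup>2 * j))"
    using prob_block_ord_stat_le[OF assms] prob_block_ord_stat_gt[OF assms(1-3)]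
    unfolding L_def U_def by linarith
  finally have "prob (?A \<union> ?B) \<le> 2 * (b / ((b - 1)\<^sup>2 * j))" .
  moreover have "{\<omega> \<in> space M. ?T \<omega> \<le> L \<or> U < ?T \<omega>} = ?A \<union> ?B" by auto
  ultimately show ?thesis unfolding L_def U_def by simp
qed

section \<open>The log-spacing estimator\<close>

lemma prob_log_spacing_far_le:
  fixes j1 j2 k :: nat and b r \<gamma> \<epsilon> :: real
  defines "t1 \<equiv> real m * real k / real j1" and "t2 \<equiv> real m * real k / real j2"
  assumes "1 < r" and b: "1 < b" and j1: "0 < j1" "j1 < k" and j2: "0 < j2" "j2 < k"
    and small: "b\<^sup>2 * j1 \<le> (b - 1) * k" "b\<^sup>2 * j2 \<le> (b - 1) * k"
    and V_pos: "0 < V_fun F (t1 / b\<^sup>2)" "0 < V_fun F (t2 / b\<^sup>2)"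
    and upper: "ln (V_fun F (b * t1)) - ln (V_fun F (t2 / b\<^sup>2)) + ln b < (\<gamma> + \<epsilon>) * ln r"
    and lower: "(\<gamma> - \<epsilon>) * ln r < ln (V_fun F (t1 / b\<^sup>2)) - ln (V_fun F (b * t2)) - ln b"
  shows "prob {\<omega> \<in> space M. \<epsilon> < \<bar>(ln (block_ord_stat X m k (k - j1) \<omega>)
      - ln (block_ord_stat X m k (k - j2) \<omega>)) / ln r - \<gamma>\<bar>}
    \<le> 2 * (b / ((b - 1)\<^sup>2 * j1)) + 2 * (b / ((b - 1)\<^sup>2 * j2))"
proof -
  let ?T1 = "block_ord_stat X m k (k - j1)" and ?T2 = "block_ord_stat X m k (k - j2)"
  let ?L1 = "V_fun F (t1 / b\<^sup>2) / b" and ?L2 = "V_fun F (t2 / b\<^sup>2) / b"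
  let ?U1 = "V_fun F (b * t1)" and ?U2 = "V_fun F (b * t2)"
  let ?Out1 = "{\<omega> \<in> space M. ?T1 \<omega> \<le> ?L1 \<or> ?U1 < ?T1 \<omega>}"
  let ?Out2 = "{\<omega> \<in> space M. ?T2 \<omega> \<le> ?L2 \<or> ?U2 < ?T2 \<omega>}"
  let ?far = "{\<omega> \<in> space M. \<epsilon> < \<bar>(ln (?T1 \<omega>) - ln (?T2 \<omega>)) / ln r - \<gamma>\<bar>}"
  note [measurable] = borel_measurable_block_ord_stat[OF j1(2)] borel_measurable_block_ord_stat[OF j2(2)]
  have ln_L: "ln (V_fun F (t / b\<^sup>2) / b) = ln (V_fun F (t / b\<^sup>2)) - ln b" if "0 < V_fun F (t / b\<^sup>2)" for t
    using that b by (simp add: ln_div)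
  have "?far \<subseteq> ?Out1 \<union> ?Out2"
  proof (rule subsetI, rule ccontr)
    fix \<omega> assume "\<omega> \<in> ?far" "\<omega> \<notin> ?Out1 \<union> ?Out2"
    then have "?L1 < ?T1 \<omega>" "?T1 \<omega> \<le> ?U1" "?L2 < ?T2 \<omega>" "?T2 \<omega> \<le> ?U2" by auto
    then have "\<bar>(ln (?T1 \<omega>) - ln (?T2 \<omega>)) / ln r - \<gamma>\<bar> < \<epsilon>"
      using \<open>1 < r\<close> V_pos b upper lower ln_L[OF V_pos(1)] ln_L[OF V_pos(2)]
      by (intro log_ratio_bracket) auto
    with \<open>\<omega> \<in> ?far\<close> show False by simp
  qed
  then have "prob ?far \<le> prob (?Out1 \<union> ?Out2)" by (intro finite_measure_mono) measurable
  also have "\<dots> \<le> prob ?Out1 + prob ?Out2" by (intro measure_Un_le) measurable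
  also have "\<dots> \<le> 2 * (b / ((b - 1)\<^sup>2 * j1)) + 2 * (b / ((b - 1)\<^sup>2 * j2))"
    using prob_block_ord_stat_outside[OF j1 b small(1)] prob_block_ord_stat_outside[OF j2 b small(2)]
      V_pos unfolding t1_def t2_def by (intro add_mono) simp_all
  finally show ?thesis .
qed

lemma eventually_prob_log_spacing_far_le:
  fixes j1 j2 :: "nat \<Rightarrow> nat" and b r \<gamma> \<epsilon> :: real
  assumes A1: "condA1 F \<gamma>" and "0 < \<gamma>" "1 < r"
    and j_top: "filterlim (\<lambda>k. real (j1 k)) at_top sequentially" "filterlim (\<lambda>k. real (j2 k)) at_top sequentially"
    and j_small: "(\<lambda>k. real (j1 k) / real k) \<longlonglongrightarrow> 0" "(\<lambda>k. real (j2 k) / real k) \<longlonglongrightarrow> 0"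
    and ratio: "(\<lambda>k. real (j2 k) / real (j1 k)) \<longlonglongrightarrow> r"
    and b: "1 < b" "(3 * \<gamma> + 1) * ln b < \<epsilon> * ln r"
  shows "eventually (\<lambda>k. prob {\<omega> \<in> space M. \<epsilon> < \<bar>(ln (block_ord_stat X m k (k - j1 k) \<omega>)
      - ln (block_ord_stat X m k (k - j2 k) \<omega>)) / ln r - \<gamma>\<bar>}
    \<le> 2 * (b / ((b - 1)\<^sup>2 * j1 k)) + 2 * (b / ((b - 1)\<^sup>2 * j2 k))) sequentially"
proof -
  define t1 where "t1 k = real m * real k / real (j1 k)" for k
  define t2 where "t2 k = real m * real k / real (j2 k)" for k
  have m: "0 < real m" using block_length by simp
  have j_pos: "eventually (\<lambda>k. 0 < j k) sequentially"
    if "filterlim (\<lambda>k. real (j k)) at_top sequentially" for j :: "nat \<Rightarrow> nat"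
    using that[unfolded filterlim_at_top_dense, rule_format, of 0] by simp
  have j_le: "eventually (\<lambda>k. j k < k \<and> b\<^sup>2 * j k \<le> (b - 1) * k) sequentially"
    if "(\<lambda>k. real (j k) / real k) \<longlonglongrightarrow> 0" for j :: "nat \<Rightarrow> nat"
  proof -
    have "0 < min 1 ((b - 1) / b\<^sup>2)" using b(1) by simp
    with that have "eventually (\<lambda>k. real (j k) / real k < min 1 ((b - 1) / b\<^sup>2)) sequentially"
      by (rule order_tendstoD)
    then show ?thesis using eventually_gt_at_top[of 0]
      by eventually_elim (use b(1) in \<open>auto simp: field_simps\<close>)
  qed
  have t_top: "filterlim t1 at_top sequentially" "filterlim t2 at_top sequentially"
    unfolding t1_def t2_def using j_small j_pos[OF j_top(1)] j_pos[OF j_top(2)] m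
    by (auto intro: filterlim_mult_div_at_top)
  have "eventually (\<lambda>k. t1 k / t2 k = real (j2 k) / real (j1 k)) sequentially"
    using eventually_gt_at_top[of 0] by eventually_elim (use m in \<open>simp add: t1_def t2_def\<close>)
  then have t_ratio: "(\<lambda>k. t1 k / t2 k) \<longlonglongrightarrow> r"
    using ratio by (rule tendsto_cong[THEN iffD2])
  have V_pos: "eventually (\<lambda>k. 0 < V_fun F (t k / b\<^sup>2)) sequentially"
    if "filterlim t at_top sequentially" for t :: "nat \<Rightarrow> real"
    using eventually_compose_filterlim[OF eventually_V_fun_pos[OF A1 \<open>0 < \<gamma>\<close>]
        filterlim_tendsto_pos_mult_at_top[OF tendsto_const _ that, of "1 / b\<^sup>2"]] b(1)
    by simp
  have spacing: "eventually (\<lambda>k. ln (V_fun F (b * t1 k)) - ln (V_fun F (t2 k / b\<^sup>2)) + ln b < (\<gamma> + \<epsilon>) * ln r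
      \<and> (\<gamma> - \<epsilon>) * ln r < ln (V_fun F (t1 k / b\<^sup>2)) - ln (V_fun F (b * t2 k)) - ln b) sequentially"
    using A1 \<open>1 < r\<close> b unfolding condA1_def
    by (intro eventually_ln_spacing_bounds[OF mono_on_V_fun eventually_V_fun_pos[OF A1 \<open>0 < \<gamma>\<close>]
          _ t_top(2) t_ratio]) auto
  show ?thesis
    using j_pos[OF j_top(1)] j_pos[OF j_top(2)] j_le[OF j_small(1)] j_le[OF j_small(2)]
      V_pos[OF t_top(1)] V_pos[OF t_top(2)] spacing
    by eventually_elim (intro prob_log_spacing_far_le \<open>1 < r\<close> b(1), auto simp: t1_def t2_def)
qed

lemma tendsto_prob_log_spacing_far:
  fixes j1 j2 :: "nat \<Rightarrow> nat" and r \<gamma> \<epsilon> :: real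
  assumes A1: "condA1 F \<gamma>" and "0 < \<gamma>" "1 < r" "0 < \<epsilon>"
    and j_top: "filterlim (\<lambda>k. real (j1 k)) at_top sequentially" "filterlim (\<lambda>k. real (j2 k)) at_top sequentially"
    and j_small: "(\<lambda>k. real (j1 k) / real k) \<longlonglongrightarrow> 0" "(\<lambda>k. real (j2 k) / real k) \<longlonglongrightarrow> 0"
    and ratio: "(\<lambda>k. real (j2 k) / real (j1 k)) \<longlonglongrightarrow> r"
  shows "(\<lambda>k. prob {\<omega> \<in> space M. \<epsilon> < \<bar>(ln (block_ord_stat X m k (k - j1 k) \<omega>)
      - ln (block_ord_stat X m k (k - j2 k) \<omega>)) / ln r - \<gamma>\<bar>}) \<longlonglongrightarrow> 0"
proof -
  define D where "D = 3 * \<gamma> + 1"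
  define b where "b = exp (\<epsilon> * ln r / (2 * D))"
  have "0 < D" using assms(2) by (simp add: D_def)
  then have "D * ln b = \<epsilon> * ln r / 2" by (simp add: b_def)
  then have b: "1 < b" "(3 * \<gamma> + 1) * ln b < \<epsilon> * ln r"
    using \<open>0 < D\<close> \<open>1 < r\<close> \<open>0 < \<epsilon>\<close> by (simp_all add: b_def D_def[symmetric])
  have bound: "eventually (\<lambda>k. prob {\<omega> \<in> space M. \<epsilon> < \<bar>(ln (block_ord_stat X m k (k - j1 k) \<omega>)
      - ln (block_ord_stat X m k (k - j2 k) \<omega>)) / ln r - \<gamma>\<bar>}
    \<le> 2 * (b / ((b - 1)\<^sup>2 * j1 k)) + 2 * (b / ((b - 1)\<^sup>2 * j2 k))) sequentially"
    by (rule eventually_prob_log_spacing_far_le[OF A1 \<open>0 < \<gamma>\<close> \<open>1 < r\<close> j_top j_small ratio b])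
  have "(\<lambda>k. b / ((b - 1)\<^sup>2 * j k)) \<longlonglongrightarrow> 0"
    if "filterlim (\<lambda>k. real (j k)) at_top sequentially" for j :: "nat \<Rightarrow> nat"
    using b(1) by (intro tendsto_divide_0[OF tendsto_const] filterlim_at_top_imp_at_infinity
        filterlim_tendsto_pos_mult_at_top[OF tendsto_const _ that]) simp
  then have "(\<lambda>k. 2 * (b / ((b - 1)\<^sup>2 * j1 k)) + 2 * (b / ((b - 1)\<^sup>2 * j2 k))) \<longlonglongrightarrow> 0"
    using j_top by (intro tendsto_add_zero tendsto_mult_right_zero)
  then show ?thesis by (rule tendsto_sandwich[OF always_eventually[OF allI[OF measure_nonneg]] bound tendsto_const])
qed

end

lemma gamma_hat_eq_log_spacing:
  assumes "0 \<le> \<theta>"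
  shows "gamma_hat X m \<theta> k \<omega> = (ln (block_ord_stat X m k (k - nat \<lceil>\<theta> / 4\<rceil>) \<omega>)
    - ln (block_ord_stat X m k (k - nat \<lceil>\<theta> / 2\<rceil>) \<omega>)) / ln 2"
  using assms unfolding gamma_hat_def by (simp add: nat_diff_distrib')

theorem theorem2p1:
  fixes M :: "'a measure" and X :: "nat \<Rightarrow> 'a \<Rightarrow> real" and F :: "real \<Rightarrow> real"
    and \<gamma> :: real and m :: nat and \<theta> :: "nat \<Rightarrow> real"
  assumes "prob_space M"
    and "\<And>j. j \<ge> 1 \<Longrightarrow> X j \<in> borel_measurable M"
    and "prob_space.indep_vars M (\<lambda>_. borel) X {1..}"
    and "\<And>j x. j \<ge> 1 \<Longrightarrow> measure M {\<omega> \<in> space M. X j \<omega> \<le> x} = F x"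
    and "\<gamma> > 0" and "condA1 F \<gamma>"
    and "m \<ge> 2"
    and "\<And>k. k \<ge> 1 \<Longrightarrow> 0 < \<theta> k \<and> \<theta> k \<le> real k"
    and "filterlim \<theta> at_top sequentially"
    and "(\<lambda>k. \<theta> k / real k) \<longlonglongrightarrow> 0"
  shows "\<forall>\<epsilon>>0. (\<lambda>k. measure M {\<omega> \<in> space M. \<bar>gamma_hat X m (\<theta> k) k \<omega> - \<gamma>\<bar> > \<epsilon>})
            \<longlonglongrightarrow> 0"
proof (intro allI impI)
  fix \<epsilon> :: real assume "0 < \<epsilon>"
  interpret iid_block_maxima M X F m
    using assms(1-4,7) by (simp add: iid_block_maxima_def iid_block_maxima_axioms_def)
  define j where "j c k = nat \<lceil>\<theta> k / c\<rceil>" for c k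
  have numerals: "(0::real) < 4" "(0::real) < 2" "(1::real) < 2" by simp_all
  note j4 = nat_ceiling_div_asymptotics[OF assms(9,10) numerals(1), folded j_def]
    and j2 = nat_ceiling_div_asymptotics[OF assms(9,10) numerals(2), folded j_def]
  have \<theta>_pos: "eventually (\<lambda>k. 0 < \<theta> k) sequentially"
    using eventually_ge_at_top[of 1] by eventually_elim (use assms(8) in blast)
  have "(\<lambda>k. (real (j 2 k) / \<theta> k) / (real (j 4 k) / \<theta> k)) \<longlonglongrightarrow> 2"
    using tendsto_divide[OF j2(3) j4(3)] by simp
  then have ratio: "(\<lambda>k. real (j 2 k) / real (j 4 k)) \<longlonglongrightarrow> 2"
    by (rule tendsto_cong[THEN iffD1, rotated]) (use \<theta>_pos in \<open>auto elim: eventually_mono\<close>)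
  have "eventually (\<lambda>k. prob {\<omega> \<in> space M. \<epsilon> < \<bar>gamma_hat X m (\<theta> k) k \<omega> - \<gamma>\<bar>}
      = prob {\<omega> \<in> space M. \<epsilon> < \<bar>(ln (block_ord_stat X m k (k - j 4 k) \<omega>)
          - ln (block_ord_stat X m k (k - j 2 k) \<omega>)) / ln 2 - \<gamma>\<bar>}) sequentially"
    using \<theta>_pos by eventually_elim (simp add: gamma_hat_eq_log_spacing j_def)
  then show "(\<lambda>k. prob {\<omega> \<in> space M. \<bar>gamma_hat X m (\<theta> k) k \<omega> - \<gamma>\<bar> > \<epsilon>}) \<longlonglongrightarrow> 0"
    using tendsto_prob_log_spacing_far[OF assms(6,5) numerals(3) \<open>0 < \<epsilon>\<close> j4(1) j2(1) j4(2) j2(2) ratio]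
    by (rule tendsto_cong[THEN iffD2])
qed

end
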